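(* Let $G,H$ be finite groups and $U\leq G\times H$ a subdirect product. Suppose that for each prime divisor $p$ of $|q(U)|$ the Sylow $p$-subgroups of $q(U)$ are cyclic. Then $U$ is extensible.
   Context: For $U\leq G\times H$: $p_1(U)=\{g:\exists h,(g,h)\in U\}$, $p_2(U)=\{h:\exists g,(g,h)\in U\}$, $k_1(U)=\{g:(g,1)\in U\}$; $U$ is a subdirect product if $p_1(U)=G$, $p_2(U)=H$; the Goursat quotient is $q(U)=p_1(U)/k_1(U)$. An abelian group $A$ satisfies the Hypothesis (with set of primes $\pi$) if there is a unique set of primes $\pi$ such that for every $n\in\mathbb{N}$ the $n$-torsion part of $A$ is cyclic of order $n_\pi$ (the $\pi$-part of $n$). $U$ is $A$-extensible if every homomorphism $U\to A$ extends to a homomorphism $G\times H\to A$; $U$ is extensible if it is $A$-extensible for every abelian group $A$ satisfying the Hypothesis. *)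

theory Defs
  imports "HOL-Algebra.Algebra" "HOL-Computational_Algebra.Primes"
begin

definition proj1 :: "('a \<times> 'b) set \<Rightarrow> 'a set" where
  "proj1 U = {g. \<exists>h. (g, h) \<in> U}"

definition proj2 :: "('a \<times> 'b) set \<Rightarrow> 'b set" where
  "proj2 U = {h. \<exists>g. (g, h) \<in> U}"

definition ker1 :: "('b, 'm) monoid_scheme \<Rightarrow> ('a \<times> 'b) set \<Rightarrow> 'a set" where
  "ker1 H U = {g. (g, \<one>\<^bsub>H\<^esub>) \<in> U}"

definition subdirect ::
  "('a, 'm) monoid_scheme \<Rightarrow> ('b, 'n) monoid_scheme \<Rightarrow> ('a \<times> 'b) set \<Rightarrow> bool" where
  "subdirect G H U \<longleftrightarrow> subgroup U (G \<times>\<times> H) \<and> proj1 U = carrier G \<and> proj2 U = carrier H"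

definition goursat_quot ::
  "('a, 'm) monoid_scheme \<Rightarrow> ('b, 'n) monoid_scheme \<Rightarrow> ('a \<times> 'b) set \<Rightarrow> 'a set monoid" where
  "goursat_quot G H U = (G\<lparr>carrier := proj1 U\<rparr>) Mod (ker1 H U)"

definition sylow_subgroup :: "('a, 'm) monoid_scheme \<Rightarrow> nat \<Rightarrow> 'a set \<Rightarrow> bool" where
  "sylow_subgroup Q p P \<longleftrightarrow> subgroup P Q \<and> card P = p ^ multiplicity p (order Q)"

definition pi_part :: "nat set \<Rightarrow> nat \<Rightarrow> nat" where
  "pi_part \<pi> n = (\<Prod>p \<in> prime_factors n \<inter> \<pi>. p ^ multiplicity p n)"

definition torsion_part :: "('c, 'm) monoid_scheme \<Rightarrow> nat \<Rightarrow> 'c set" where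
  "torsion_part A n = {a \<in> carrier A. a [^]\<^bsub>A\<^esub> n = \<one>\<^bsub>A\<^esub>}"

definition hypothesis_with :: "('c, 'm) monoid_scheme \<Rightarrow> nat set \<Rightarrow> bool" where
  "hypothesis_with A \<pi> \<longleftrightarrow> \<pi> \<subseteq> {p. Factorial_Ring.prime p} \<and>
     (\<forall>n::nat. n > 0 \<longrightarrow> cyclic_group (A\<lparr>carrier := torsion_part A n\<rparr>)
                         \<and> card (torsion_part A n) = pi_part \<pi> n)"

definition satisfies_hypothesis :: "('c, 'm) monoid_scheme \<Rightarrow> bool" where
  "satisfies_hypothesis A \<longleftrightarrow> comm_group A \<and> (\<exists>!\<pi>. hypothesis_with A \<pi>)"

definition A_extensible ::
  "('a, 'm) monoid_scheme \<Rightarrow> ('b, 'n) monoid_scheme \<Rightarrow> ('c, 'k) monoid_scheme \<Rightarrow> ('a \<times> 'b) set \<Rightarrow> bool" where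
  "A_extensible G H A U \<longleftrightarrow>
     (\<forall>f \<in> hom ((G \<times>\<times> H)\<lparr>carrier := U\<rparr>) A.
        \<exists>\<phi> \<in> hom (G \<times>\<times> H) A. \<forall>u \<in> U. \<phi> u = f u)"

end

(* An abelian group A satisfying the Hypothesis is divisible on its torsion:
   x \<mapsto> x^n maps the nN-torsion onto the N-torsion, because its kernel is the n-torsion
   and the orders are multiplicative.  Given f : U \<rightarrow> A, its restriction l to K = k1(U) is a
   homomorphism invariant under conjugation by G, and f extends to G \<times> H as soon as l extends
   to G.  The integers e for which l^e extends to G form an ideal of \<int>.  By the transfer, it
   contains the index [G:P] of every subgroup K \<le> P \<le> G to which l extends, in particular
   [G:K].  For a prime q dividing [G:K], let P/K be a Sylow q-subgroup of G/K.  It is cyclic,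
   generated by gK say, and l extends to P by sending g to an n-th root of l(g^n), where n is
   the order of gK.  Since q does not divide [G:P], the ideal is all of \<int>. *)

theory Submission
  imports Defs
begin

section \<open>Torsion-divisible abelian groups\<close>

lemma pi_part_pos: "pi_part \<pi> n > 0"
  unfolding pi_part_def by (intro prod_pos) (auto intro: prime_gt_0_nat)

lemma pi_part_mult:
  assumes "m > 0" "n > 0"
  shows "pi_part \<pi> (m * n) = pi_part \<pi> m * pi_part \<pi> n"
proof -
  define F where "F = prime_factors (m * n) \<inter> \<pi>"
  have restrict: "pi_part \<pi> k = (\<Prod>p\<in>F. p ^ multiplicity p k)" if "k = m \<or> k = n" for k
    unfolding pi_part_def
  proof (rule prod.mono_neutral_left)
    show "prime_factors k \<inter> \<pi> \<subseteq> F"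
      using that assms by (auto simp: F_def prime_factors_product)
    show "\<forall>p\<in>F - prime_factors k \<inter> \<pi>. p ^ multiplicity p k = 1"
      using that assms by (auto simp: F_def in_prime_factors_iff prime_multiplicity_gt_zero_iff)
  qed (simp add: F_def)
  have "pi_part \<pi> (m * n) = (\<Prod>p\<in>F. p ^ multiplicity p m * p ^ multiplicity p n)"
    unfolding pi_part_def F_def[symmetric] using assms
    by (intro prod.cong)
      (auto simp: F_def in_prime_factors_iff prime_elem_multiplicity_mult_distrib power_add)
  also have "\<dots> = pi_part \<pi> m * pi_part \<pi> n"
    by (simp add: prod.distrib restrict)
  finally show ?thesis .
qed

lemma (in group_hom) card_image_mult_card_kernel:
  "card (h ` carrier G) * card (kernel G H h) = order G"
proof -
  have "subgroup (h ` carrier G) H"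
    by (rule img_is_subgroup)
  then interpret img: group_hom G "H\<lparr>carrier := h ` carrier G\<rparr>" h
    using H.subgroup_imp_group homh by (auto simp: group_hom_def group_hom_axioms_def hom_def)
  have "G Mod kernel G H h \<cong> H\<lparr>carrier := h ` carrier G\<rparr>"
    using img.FactGroup_iso by (simp add: kernel_def)
  then have "card (rcosets kernel G H h) = card (h ` carrier G)"
    by (auto dest: iso_same_card simp: FactGroup_def)
  then show ?thesis
    using G.lagrange[OF subgroup_kernel] by simp
qed

lemma (in comm_group) subgroup_torsion_part: "subgroup (torsion_part G n) G"
  by (rule subgroupI) (auto simp: torsion_part_def nat_pow_distrib nat_pow_inv)

definition torsion_divisible :: "('c, 'm) monoid_scheme \<Rightarrow> bool" where
  "torsion_divisible A \<longleftrightarrow> (\<forall>b\<in>carrier A. \<forall>N::nat. N > 0 \<longrightarrow> b [^]\<^bsub>A\<^esub> N = \<one>\<^bsub>A\<^esub> \<longrightarrow>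
      (\<forall>n::nat. n > 0 \<longrightarrow> (\<exists>a\<in>carrier A. a [^]\<^bsub>A\<^esub> n = b)))"

lemma torsion_divisibleD:
  fixes N n :: nat
  assumes "torsion_divisible A" "b \<in> carrier A" "N > 0" "b [^]\<^bsub>A\<^esub> N = \<one>\<^bsub>A\<^esub>" "n > 0"
  shows "\<exists>a\<in>carrier A. a [^]\<^bsub>A\<^esub> n = b"
  using assms unfolding torsion_divisible_def by blast

lemma (in comm_group) torsion_divisible_if_hypothesis_with:
  assumes hyp: "hypothesis_with G \<pi>"
  shows "torsion_divisible G"
  unfolding torsion_divisible_def
proof (intro ballI allI impI)
  fix b and N n :: nat
  assume b: "b \<in> carrier G" "N > 0" "b [^] N = \<one>" and n: "n > 0"
  have card_torsion: "card (torsion_part G k) = pi_part \<pi> k" if "k > 0" for k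
    using hyp that by (simp add: hypothesis_with_def)
  define T where "T = torsion_part G (n * N)"
  have sub_T: "subgroup T G"
    unfolding T_def by (rule subgroup_torsion_part)
  interpret T: group "G\<lparr>carrier := T\<rparr>"
    by (rule subgroup_imp_group[OF sub_T])
  interpret pow: group_hom "G\<lparr>carrier := T\<rparr>" G "\<lambda>x. x [^] n"
    using T.is_group is_group
    by (auto simp: group_hom_def group_hom_axioms_def hom_def nat_pow_distrib subgroup.mem_carrier[OF sub_T])
  have "kernel (G\<lparr>carrier := T\<rparr>) G (\<lambda>x. x [^] n) = torsion_part G n"
    by (auto simp: kernel_def T_def torsion_part_def nat_pow_pow[symmetric])
  with pow.card_image_mult_card_kernel
  have "card ((\<lambda>x. x [^] n) ` T) * pi_part \<pi> n = pi_part \<pi> n * pi_part \<pi> N"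
    using b n by (simp add: order_def T_def card_torsion pi_part_mult)
  then have "card ((\<lambda>x. x [^] n) ` T) = card (torsion_part G N)"
    using pi_part_pos[of \<pi> n] b card_torsion by simp
  moreover have "(\<lambda>x. x [^] n) ` T \<subseteq> torsion_part G N"
    by (auto simp: T_def torsion_part_def nat_pow_pow mult.commute)
  moreover have "finite (torsion_part G N)"
    using card_torsion[OF b(2)] pi_part_pos by (metis card.infinite less_not_refl)
  ultimately have "(\<lambda>x. x [^] n) ` T = torsion_part G N"
    by (intro card_subset_eq) auto
  moreover have "b \<in> torsion_part G N"
    using b by (simp add: torsion_part_def)
  ultimately show "\<exists>a\<in>carrier G. a [^] n = b"
    using subgroup.mem_carrier[OF sub_T] by (metis imageE)
qed

section \<open>The transfer\<close>

definition coset_rep :: "'a set \<Rightarrow> 'a" where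
  "coset_rep C = (SOME x. x \<in> C)"

definition transfer_factor :: "('a, 'm) monoid_scheme \<Rightarrow> 'a set \<Rightarrow> 'a \<Rightarrow> 'a" where
  "transfer_factor G C g = coset_rep C \<otimes>\<^bsub>G\<^esub> g \<otimes>\<^bsub>G\<^esub> inv\<^bsub>G\<^esub> coset_rep (C #>\<^bsub>G\<^esub> g)"

definition transfer ::
  "('a, 'm) monoid_scheme \<Rightarrow> ('c, 'n) monoid_scheme \<Rightarrow> 'a set \<Rightarrow> ('a \<Rightarrow> 'c) \<Rightarrow> 'a \<Rightarrow> 'c" where
  "transfer G A P \<mu> g = finprod A (\<lambda>C. \<mu> (transfer_factor G C g)) (rcosets\<^bsub>G\<^esub> P)"

context group
begin

lemma coset_rep:
  assumes "subgroup P G" "C \<in> rcosets P"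
  shows coset_rep_mem: "coset_rep C \<in> C"
    and coset_rep_carrier: "coset_rep C \<in> carrier G"
    and rcos_coset_rep: "P #> coset_rep C = C"
proof -
  obtain x where x: "x \<in> carrier G" "C = P #> x"
    using assms(2) unfolding RCOSETS_def by blast
  then have "x \<in> C"
    using rcos_self assms(1) by blast
  then show rep: "coset_rep C \<in> C"
    unfolding coset_rep_def by (rule someI)
  then show "coset_rep C \<in> carrier G"
    using subgroup.rcosets_carrier[OF assms(1) is_group assms(2)] by blast
  show "P #> coset_rep C = C"
    using repr_independence[OF _ x(1) assms(1)] rep x(2) by simp
qed

lemma rcosets_rcos_closed:
  assumes "subgroup P G" "C \<in> rcosets P" "g \<in> carrier G"
  shows "C #> g \<in> rcosets P"
proof -
  obtain x where x: "x \<in> carrier G" "C = P #> x"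
    using assms(2) unfolding RCOSETS_def by blast
  then have "C #> g = P #> (x \<otimes> g)"
    using coset_mult_assoc[OF subgroup.subset[OF assms(1)]] assms(3) by simp
  then show ?thesis
    using rcosetsI[OF subgroup.subset[OF assms(1)]] x(1) assms(3) by simp
qed

lemma rcos_rcos_inv:
  assumes "subgroup P G" "C \<in> rcosets P" "g \<in> carrier G"
  shows "C #> g #> inv g = C"
proof -
  have "C \<subseteq> carrier G"
    using subgroup.rcosets_carrier[OF assms(1) is_group assms(2)] .
  then show ?thesis
    using coset_mult_assoc[of C g "inv g"] assms(3) by (simp add: coset_mult_one)
qed

lemma image_rcos_rcosets:
  assumes "subgroup P G" "g \<in> carrier G"
  shows "(\<lambda>C. C #> g) ` (rcosets P) = rcosets P"
proof
  show "(\<lambda>C. C #> g) ` (rcosets P) \<subseteq> rcosets P"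
    using rcosets_rcos_closed assms by blast
  show "rcosets P \<subseteq> (\<lambda>C. C #> g) ` (rcosets P)"
  proof
    fix D assume D: "D \<in> rcosets P"
    have "D = D #> inv g #> inv (inv g)"
      using rcos_rcos_inv[OF assms(1) D inv_closed[OF assms(2)]] by simp
    then have "D = D #> inv g #> g"
      using assms(2) by simp
    moreover have "D #> inv g \<in> rcosets P"
      using rcosets_rcos_closed[OF assms(1) D] assms(2) by simp
    ultimately show "D \<in> (\<lambda>C. C #> g) ` (rcosets P)"
      by (rule image_eqI)
  qed
qed

lemma inj_on_rcos_rcosets:
  assumes "subgroup P G" "g \<in> carrier G"
  shows "inj_on (\<lambda>C. C #> g) (rcosets P)"
proof (rule inj_onI)
  fix C D assume "C \<in> rcosets P" "D \<in> rcosets P" "C #> g = D #> g"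
  then show "C = D"
    using rcos_rcos_inv[OF assms(1) _ assms(2)] by metis
qed

lemma transfer_factor_mem:
  assumes "subgroup P G" "C \<in> rcosets P" "g \<in> carrier G"
  shows "transfer_factor G C g \<in> P"
proof -
  have rep: "coset_rep C \<otimes> g \<in> carrier G"
    using coset_rep_carrier assms by simp
  have "C #> g = P #> (coset_rep C \<otimes> g)"
    using rcos_coset_rep[OF assms(1,2)] coset_mult_assoc[OF subgroup.subset[OF assms(1)]]
      coset_rep_carrier[OF assms(1,2)] assms(3)
    by metis
  then have "coset_rep (C #> g) \<in> P #> (coset_rep C \<otimes> g)"
    using coset_rep_mem[OF assms(1) rcosets_rcos_closed[OF assms]] by simp
  then have "inv (coset_rep (C #> g) \<otimes> inv (coset_rep C \<otimes> g)) \<in> P"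
    using subgroup.rcos_module[OF assms(1) is_group rep] subgroup.m_inv_closed[OF assms(1)]
      coset_rep_carrier[OF assms(1) rcosets_rcos_closed[OF assms]] by blast
  then show ?thesis
    unfolding transfer_factor_def
    using rep coset_rep_carrier[OF assms(1) rcosets_rcos_closed[OF assms]]
    by (simp add: inv_mult_group)
qed

lemma transfer_factor_mult:
  assumes "subgroup P G" "C \<in> rcosets P" "g \<in> carrier G" "h \<in> carrier G"
  shows "transfer_factor G C (g \<otimes> h) = transfer_factor G C g \<otimes> transfer_factor G (C #> g) h"
proof -
  have "C #> g #> h = C #> (g \<otimes> h)"
    using coset_mult_assoc subgroup.rcosets_carrier[OF assms(1) is_group assms(2)] assms(3,4)
    by simp
  moreover have "coset_rep C \<in> carrier G" "coset_rep (C #> g) \<in> carrier G"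
      "coset_rep (C #> (g \<otimes> h)) \<in> carrier G"
    using coset_rep_carrier rcosets_rcos_closed assms by auto
  ultimately show ?thesis
    unfolding transfer_factor_def using assms(3,4) by (simp add: m_assoc) (simp flip: m_assoc)
qed

lemma transfer_hom:
  assumes "comm_group A" "subgroup P G" "\<mu> \<in> hom (G\<lparr>carrier := P\<rparr>) A"
  shows "transfer G A P \<mu> \<in> hom G A"
proof -
  interpret A: comm_group A by fact
  have factor_A: "\<mu> (transfer_factor G C g) \<in> carrier A" if "C \<in> rcosets P" "g \<in> carrier G" for C g
    using hom_in_carrier[OF assms(3)] transfer_factor_mem[OF assms(2) that] by simp
  show ?thesis
  proof (rule homI)
    fix g assume "g \<in> carrier G"
    then show "transfer G A P \<mu> g \<in> carrier A"
      unfolding transfer_def using factor_A by simp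
  next
    fix g h assume g: "g \<in> carrier G" and h: "h \<in> carrier G"
    have "transfer G A P \<mu> (g \<otimes> h) = finprod A (\<lambda>C. \<mu> (transfer_factor G C g)
        \<otimes>\<^bsub>A\<^esub> \<mu> (transfer_factor G (C #> g) h)) (rcosets P)"
      unfolding transfer_def
      using hom_mult[OF assms(3)] transfer_factor_mult[OF assms(2) _ g h]
        transfer_factor_mem[OF assms(2) _ g] transfer_factor_mem[OF assms(2) rcosets_rcos_closed[OF assms(2) _ g] h]
        factor_A[OF _ g] factor_A[OF rcosets_rcos_closed[OF assms(2) _ g] h]
      by (intro A.finprod_cong') (auto simp: Pi_def)
    also have "\<dots> = transfer G A P \<mu> g \<otimes>\<^bsub>A\<^esub>
        finprod A (\<lambda>C. \<mu> (transfer_factor G (C #> g) h)) (rcosets P)"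
      unfolding transfer_def
      using factor_A[OF _ g] factor_A[OF rcosets_rcos_closed[OF assms(2) _ g] h]
      by (simp add: Pi_def)
    also have "finprod A (\<lambda>C. \<mu> (transfer_factor G (C #> g) h)) (rcosets P) = transfer G A P \<mu> h"
      unfolding transfer_def
      using A.finprod_reindex[OF _ inj_on_rcos_rcosets[OF assms(2) g]] factor_A[OF _ h]
      by (simp add: image_rcos_rcosets[OF assms(2) g] Pi_def)
    finally show "transfer G A P \<mu> (g \<otimes> h) = transfer G A P \<mu> g \<otimes>\<^bsub>A\<^esub> transfer G A P \<mu> h" .
  qed
qed

lemma transfer_normal_subgroup:
  assumes "comm_group A" "subgroup P G" "\<mu> \<in> hom (G\<lparr>carrier := P\<rparr>) A"
    and "K \<lhd> G" "K \<subseteq> P"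
    and invariant: "\<And>x k. x \<in> carrier G \<Longrightarrow> k \<in> K \<Longrightarrow> \<mu> (x \<otimes> k \<otimes> inv x) = \<mu> k"
    and "k \<in> K"
  shows "transfer G A P \<mu> k = \<mu> k [^]\<^bsub>A\<^esub> card (rcosets P)"
proof -
  interpret A: comm_group A by fact
  interpret K: normal K G by fact
  have "\<mu> (transfer_factor G C k) = \<mu> k" if C: "C \<in> rcosets P" for C
  proof -
    let ?r = "coset_rep C"
    have r: "?r \<in> carrier G"
      using coset_rep_carrier[OF assms(2) C] .
    have "?r \<otimes> k \<otimes> inv ?r \<in> P"
      using K.inv_op_closed2[OF r assms(7)] assms(5) by blast
    then have "?r \<otimes> k \<in> P #> ?r"
      using subgroup.rcos_module[OF assms(2) is_group r] r \<open>k \<in> K\<close> by auto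
    then have "C #> k = C"
      using repr_independence[OF _ r assms(2)] rcos_coset_rep[OF assms(2) C]
        coset_mult_assoc[OF subgroup.subset[OF assms(2)] r] \<open>k \<in> K\<close>
      by (metis K.subset subsetD)
    then show ?thesis
      unfolding transfer_factor_def using invariant[OF r assms(7)] by simp
  qed
  then have "transfer G A P \<mu> k = finprod A (\<lambda>C. \<mu> k) (rcosets P)"
    unfolding transfer_def using hom_in_carrier[OF assms(3)] assms(5,7)
    by (intro A.finprod_cong') auto
  also have "\<dots> = \<mu> k [^]\<^bsub>A\<^esub> card (rcosets P)"
    using hom_in_carrier[OF assms(3)] assms(5,7) by (intro A.finprod_const) auto
  finally show ?thesis .
qed

end

section \<open>Extension across a cyclic quotient\<close>

lemma (in group) hom_subgroup_int_pow:
  assumes "subgroup K G" "group A" "l \<in> hom (G\<lparr>carrier := K\<rparr>) A" "k \<in> K"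
  shows "l (k [^] (i::int)) = l k [^]\<^bsub>A\<^esub> i"
  using hom_int_pow[OF assms(3) _ subgroup_imp_group[OF assms(1)] assms(2)]
    int_pow_consistent[OF assms(1,4)] assms(4)
  by simp

lemma (in normal) rcos_eq_self_iff:
  assumes "x \<in> carrier G"
  shows "H #> x = H \<longleftrightarrow> x \<in> H"
  using rcos_self[OF assms is_subgroup] rcos_const[OF is_group] by auto

lemma (in normal) int_pow_mem_iff_ord_dvd:
  assumes "g \<in> carrier G"
  shows "g [^] (m::int) \<in> H \<longleftrightarrow> int (group.ord (G Mod H) (H #> g)) dvd m"
proof -
  interpret Q: group "G Mod H"
    by (rule factorgroup_is_group)
  have "H #> g \<in> carrier (G Mod H)"
    using assms by (simp add: carrier_FactGroup)
  then have "int (Q.ord (H #> g)) dvd m \<longleftrightarrow> H #> (g [^] m) = H"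
    using Q.int_pow_eq_id[of "H #> g" m] FactGroup_int_pow[OF assms, of m] by simp
  then show ?thesis
    using rcos_eq_self_iff assms by simp
qed

lemma (in group) ex_root_of_hom_on_powers:
  assumes "finite (carrier G)" "comm_group A" "torsion_divisible A" "K \<lhd> G"
    and l: "l \<in> hom (G\<lparr>carrier := K\<rparr>) A" and g: "g \<in> carrier G"
  shows "\<exists>a\<in>carrier A. \<forall>m::int. g [^] m \<in> K \<longrightarrow> l (g [^] m) = a [^]\<^bsub>A\<^esub> m"
proof -
  interpret A: comm_group A by fact
  interpret K: normal K G by fact
  interpret Q: group "G Mod K"
    by (rule K.factorgroup_is_group)
  define n where "n = Q.ord (K #> g)"
  have "finite (carrier (G Mod K))" "K #> g \<in> carrier (G Mod K)"
    using assms(1) g by (simp_all add: carrier_FactGroup)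
  from Q.ord_ge_1[OF this] have n: "n > 0"
    unfolding n_def by simp
  have mem_iff: "g [^] m \<in> K \<longleftrightarrow> int n dvd m" for m :: int
    unfolding n_def by (rule K.int_pow_mem_iff_ord_dvd[OF g])
  have pow_l: "l (k [^] (i::int)) = l k [^]\<^bsub>A\<^esub> i" if "k \<in> K" for k i
    by (rule hom_subgroup_int_pow[OF K.is_subgroup A.is_group l that])
  define b where "b = l (g [^] int n)"
  have gn: "g [^] int n \<in> K"
    using mem_iff by simp
  then have b: "b \<in> carrier A"
    using hom_in_carrier[OF l] by (simp add: b_def)
  have "b [^]\<^bsub>A\<^esub> int (order G) = l ((g [^] int n) [^] int (order G))"
    using pow_l[OF gn] by (simp add: b_def)
  also have "\<dots> = \<one>\<^bsub>A\<^esub>"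
    using hom_one[OF l subgroup_imp_group[OF K.is_subgroup] A.is_group] g
      pow_order_eq_1[of "g [^] n"] by (simp add: int_pow_int)
  finally have "b [^]\<^bsub>A\<^esub> order G = \<one>\<^bsub>A\<^esub>"
    by (simp add: int_pow_int)
  moreover have "order G > 0"
    using assms(1) by (simp add: order_gt_0_iff_finite)
  ultimately obtain a where a: "a \<in> carrier A" "a [^]\<^bsub>A\<^esub> n = b"
    using torsion_divisibleD[OF assms(3) b _ _ n] by blast
  have "l (g [^] m) = a [^]\<^bsub>A\<^esub> m" if gm: "g [^] m \<in> K" for m :: int
  proof -
    obtain t where t: "m = int n * t"
      using mem_iff[of m] gm by (auto elim: dvdE)
    have "l (g [^] m) = b [^]\<^bsub>A\<^esub> t"
      using pow_l[OF gn] g by (simp add: b_def t int_pow_pow)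
    also have "\<dots> = a [^]\<^bsub>A\<^esub> m"
      using A.int_pow_pow[OF a(1), of "int n" t] a(2) by (simp add: t int_pow_int)
    finally show ?thesis .
  qed
  with a show ?thesis by blast
qed

lemma (in group) root_extension_well_defined:
  fixes i j :: int
  assumes "comm_group A" "subgroup K G"
    and l: "l \<in> hom (G\<lparr>carrier := K\<rparr>) A"
    and g: "g \<in> carrier G" and x: "x \<in> carrier G"
    and a: "a \<in> carrier A" and root: "\<And>m::int. g [^] m \<in> K \<Longrightarrow> l (g [^] m) = a [^]\<^bsub>A\<^esub> m"
    and i: "x \<otimes> g [^] (- i) \<in> K" and j: "x \<otimes> g [^] (- j) \<in> K"
  shows "a [^]\<^bsub>A\<^esub> i \<otimes>\<^bsub>A\<^esub> l (x \<otimes> g [^] (- i)) = a [^]\<^bsub>A\<^esub> j \<otimes>\<^bsub>A\<^esub> l (x \<otimes> g [^] (- j))"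
proof -
  interpret A: comm_group A by fact
  interpret K: subgroup K G by fact
  let ?k = "x \<otimes> g [^] (- i)"
  have split: "x \<otimes> g [^] (- j) = ?k \<otimes> g [^] (i - j)"
    using g x by (simp add: m_assoc flip: int_pow_mult)
  then have "g [^] (i - j) = inv ?k \<otimes> (x \<otimes> g [^] (- j))"
    using g x by (simp add: inv_solve_left)
  then have gK: "g [^] (i - j) \<in> K"
    using i j by simp
  have "a [^]\<^bsub>A\<^esub> j \<otimes>\<^bsub>A\<^esub> l (x \<otimes> g [^] (- j))
      = a [^]\<^bsub>A\<^esub> j \<otimes>\<^bsub>A\<^esub> (l ?k \<otimes>\<^bsub>A\<^esub> a [^]\<^bsub>A\<^esub> (i - j))"
    using split hom_mult[OF l] i gK root[OF gK] by simp
  also have "\<dots> = (a [^]\<^bsub>A\<^esub> j \<otimes>\<^bsub>A\<^esub> a [^]\<^bsub>A\<^esub> (i - j)) \<otimes>\<^bsub>A\<^esub> l ?k"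
    using a hom_in_carrier[OF l] i by (simp add: A.m_ac)
  also have "\<dots> = a [^]\<^bsub>A\<^esub> i \<otimes>\<^bsub>A\<^esub> l ?k"
    using a by (simp flip: A.int_pow_mult)
  finally show ?thesis ..
qed

lemma (in group) conj_power_split:
  fixes i j :: int
  assumes "x \<in> carrier G" "y \<in> carrier G" "g \<in> carrier G"
  shows "x \<otimes> y \<otimes> g [^] (- (i + j))
    = x \<otimes> g [^] (- i) \<otimes> (g [^] i \<otimes> (y \<otimes> g [^] (- j)) \<otimes> inv (g [^] i))"
proof -
  have "g [^] (- (i + j)) = g [^] (- j) \<otimes> g [^] (- i)"
    using assms by (simp add: add.commute flip: int_pow_mult)
  moreover have "g [^] (- i) \<otimes> (g [^] i \<otimes> z) = z" if "z \<in> carrier G" for z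
    using assms that by (simp flip: m_assoc int_pow_mult)
  ultimately show ?thesis
    using assms by (simp add: m_assoc int_pow_neg)
qed

lemma (in group) extend_hom_along_generator:
  assumes "comm_group A" "K \<lhd> G"
    and l: "l \<in> hom (G\<lparr>carrier := K\<rparr>) A"
    and invariant: "\<And>x k. x \<in> carrier G \<Longrightarrow> k \<in> K \<Longrightarrow> l (x \<otimes> k \<otimes> inv x) = l k"
    and g: "g \<in> carrier G" and P: "subgroup P G" "K \<subseteq> P"
    and gen: "\<And>x. x \<in> P \<Longrightarrow> \<exists>i::int. x \<otimes> g [^] (-i) \<in> K"
    and a: "a \<in> carrier A" and root: "\<And>m::int. g [^] m \<in> K \<Longrightarrow> l (g [^] m) = a [^]\<^bsub>A\<^esub> m"
  shows "\<exists>\<mu> \<in> hom (G\<lparr>carrier := P\<rparr>) A. \<forall>k\<in>K. \<mu> k = l k"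
proof -
  interpret A: comm_group A by fact
  interpret K: normal K G by fact
  have lA: "l k \<in> carrier A" if "k \<in> K" for k
    using hom_in_carrier[OF l] that by simp
  define i where "i x = (SOME i::int. x \<otimes> g [^] (-i) \<in> K)" for x
  have i: "x \<otimes> g [^] (- i x) \<in> K" if "x \<in> P" for x
    unfolding i_def using gen[OF that] by (rule someI_ex)
  define \<mu> where "\<mu> x = a [^]\<^bsub>A\<^esub> i x \<otimes>\<^bsub>A\<^esub> l (x \<otimes> g [^] (- i x))" for x
  have \<mu>_eq: "\<mu> x = a [^]\<^bsub>A\<^esub> j \<otimes>\<^bsub>A\<^esub> l (x \<otimes> g [^] (- j))"
    if "x \<in> P" "x \<otimes> g [^] (- j) \<in> K" for x and j :: int
    unfolding \<mu>_def using root_extension_well_defined[OF assms(1) K.is_subgroup l g _ a root]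
      i that subgroup.mem_carrier[OF P(1)] by blast
  have "\<mu> \<in> hom (G\<lparr>carrier := P\<rparr>) A"
  proof (rule homI)
    fix x assume "x \<in> carrier (G\<lparr>carrier := P\<rparr>)"
    then show "\<mu> x \<in> carrier A"
      using a lA[OF i] by (simp add: \<mu>_def)
  next
    fix x y assume "x \<in> carrier (G\<lparr>carrier := P\<rparr>)" "y \<in> carrier (G\<lparr>carrier := P\<rparr>)"
    then have x: "x \<in> P" and y: "y \<in> P"
      by simp_all
    let ?kx = "x \<otimes> g [^] (- i x)" and ?ky = "y \<otimes> g [^] (- i y)"
    let ?c = "g [^] i x \<otimes> ?ky \<otimes> inv (g [^] i x)"
    have kx: "?kx \<in> K" and ky: "?ky \<in> K"
      using i x y by auto
    have c: "?c \<in> K" "l ?c = l ?ky"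
      using K.inv_op_closed2 invariant ky g by simp_all
    have "\<mu> (x \<otimes> y) = a [^]\<^bsub>A\<^esub> (i x + i y) \<otimes>\<^bsub>A\<^esub> l (?kx \<otimes> ?c)"
      using \<mu>_eq[of "x \<otimes> y" "i x + i y"] conj_power_split[of x y g "i x" "i y"] kx c(1) g
        subgroup.m_closed[OF P(1) x y] subgroup.mem_carrier[OF P(1)] x y by simp
    also have "\<dots> = \<mu> x \<otimes>\<^bsub>A\<^esub> \<mu> y"
      using hom_mult[OF l] kx c a lA[OF kx] lA[OF ky] by (simp add: \<mu>_def A.int_pow_mult A.m_ac)
    finally show "\<mu> (x \<otimes>\<^bsub>G\<lparr>carrier := P\<rparr>\<^esub> y) = \<mu> x \<otimes>\<^bsub>A\<^esub> \<mu> y"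
      by simp
  qed
  moreover have "\<mu> k = l k" if "k \<in> K" for k
    using \<mu>_eq[of k 0] that P(2) K.subset lA by auto
  ultimately show ?thesis
    by blast
qed

section \<open>Extending invariant homomorphisms to a finite group\<close>

lemma one_mem_if_lincomb_closed:
  fixes S :: "int set" and d :: nat
  assumes lincomb: "\<And>a b u v. a \<in> S \<Longrightarrow> b \<in> S \<Longrightarrow> u * a + v * b \<in> S"
    and "int d \<in> S" "d > 0"
    and "\<And>q. Factorial_Ring.prime q \<Longrightarrow> q dvd d \<Longrightarrow> \<exists>m\<in>S. \<not> int q dvd m"
  shows "1 \<in> S"
  using assms(2-4)
proof (induction d rule: less_induct)
  case (less d)
  show ?case
  proof (cases "d = 1")
    case True
    with less.prems show ?thesis by simp
  next
    case False
    then obtain q where q: "Factorial_Ring.prime q" "q dvd d"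
      using prime_factor_nat by blast
    then obtain m where m: "m \<in> S" "\<not> int q dvd m"
      using less.prems(3) by blast
    define e where "e = nat (gcd (int d) m)"
    have int_e: "int e = gcd (int d) m"
      by (simp add: e_def)
    obtain u v where "u * int d + v * m = gcd (int d) m"
      using bezout_int by blast
    then have "int e \<in> S"
      using lincomb[OF less.prems(1) m(1)] int_e by metis
    moreover have "e dvd d" "e > 0"
      using less.prems(2) by (auto simp: e_def nat_dvd_iff)
    moreover have "e \<noteq> d"
    proof
      assume "e = d"
      then have "int q dvd m"
        using q(2) int_e by (metis gcd_dvd2 dvd_trans int_dvd_int_iff)
      with m(2) show False ..
    qed
    then have "e < d"
      using \<open>e dvd d\<close> less.prems(2) by (simp add: dvd_imp_le le_neq_implies_less)
    moreover have "\<exists>m\<in>S. \<not> int p dvd m" if "Factorial_Ring.prime p" "p dvd e" for p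
      using less.prems(3) that \<open>e dvd d\<close> dvd_trans by blast
    ultimately show ?thesis
      using less.IH by blast
  qed
qed

lemma (in comm_group) hom_pointwise_int_pow:
  "f \<in> hom H G \<Longrightarrow> (\<lambda>x. f x [^] (i::int)) \<in> hom H G"
  by (auto simp: hom_def Pi_def int_pow_distrib)

definition extension_exponents ::
  "('a, 'm) monoid_scheme \<Rightarrow> ('c, 'n) monoid_scheme \<Rightarrow> 'a set \<Rightarrow> ('a \<Rightarrow> 'c) \<Rightarrow> int set" where
  "extension_exponents G A K l = {e. \<exists>\<alpha>\<in>hom G A. \<forall>k\<in>K. \<alpha> k = l k [^]\<^bsub>A\<^esub> e}"

lemma (in group) extension_exponents_lincomb:
  assumes "comm_group A" and lA: "\<And>k. k \<in> K \<Longrightarrow> l k \<in> carrier A"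
    and "a \<in> extension_exponents G A K l" "b \<in> extension_exponents G A K l"
  shows "u * a + v * b \<in> extension_exponents G A K l"
proof -
  interpret A: comm_group A by fact
  obtain \<alpha> where \<alpha>: "\<alpha> \<in> hom G A" "\<forall>k\<in>K. \<alpha> k = l k [^]\<^bsub>A\<^esub> a"
    using assms(3) unfolding extension_exponents_def by blast
  obtain \<beta> where \<beta>: "\<beta> \<in> hom G A" "\<forall>k\<in>K. \<beta> k = l k [^]\<^bsub>A\<^esub> b"
    using assms(4) unfolding extension_exponents_def by blast
  let ?\<gamma> = "\<lambda>x. \<alpha> x [^]\<^bsub>A\<^esub> u \<otimes>\<^bsub>A\<^esub> \<beta> x [^]\<^bsub>A\<^esub> v"
  have \<gamma>_K: "?\<gamma> k = l k [^]\<^bsub>A\<^esub> (u * a + v * b)" if "k \<in> K" for k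
  proof -
    have "?\<gamma> k = l k [^]\<^bsub>A\<^esub> (a * u) \<otimes>\<^bsub>A\<^esub> l k [^]\<^bsub>A\<^esub> (b * v)"
      using \<alpha>(2) \<beta>(2) lA[OF that] that by (simp add: A.int_pow_pow)
    also have "\<dots> = l k [^]\<^bsub>A\<^esub> (u * a + v * b)"
      using A.int_pow_mult[OF lA[OF that], of "a * u" "b * v"] by (simp add: mult.commute)
    finally show ?thesis .
  qed
  have "?\<gamma> \<in> hom G A"
    by (intro A.hom_group_mult A.hom_pointwise_int_pow \<alpha>(1) \<beta>(1))
  with \<gamma>_K show ?thesis
    unfolding extension_exponents_def by (intro CollectI bexI[of _ ?\<gamma>] ballI)
qed

lemma (in group) index_mem_extension_exponents:
  assumes "comm_group A" "K \<lhd> G"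
    and invariant: "\<And>x k. x \<in> carrier G \<Longrightarrow> k \<in> K \<Longrightarrow> l (x \<otimes> k \<otimes> inv x) = l k"
    and P: "subgroup P G" "K \<subseteq> P"
    and \<mu>: "\<mu> \<in> hom (G\<lparr>carrier := P\<rparr>) A" "\<And>k. k \<in> K \<Longrightarrow> \<mu> k = l k"
  shows "int (card (rcosets P)) \<in> extension_exponents G A K l"
proof -
  interpret K: normal K G by fact
  have "\<mu> (x \<otimes> k \<otimes> inv x) = \<mu> k" if "x \<in> carrier G" "k \<in> K" for x k
    using \<mu>(2) invariant[OF that] K.inv_op_closed2[OF that] that by simp
  then have "\<forall>k\<in>K. transfer G A P \<mu> k = l k [^]\<^bsub>A\<^esub> int (card (rcosets P))"
    using transfer_normal_subgroup[OF assms(1) P(1) \<mu>(1) assms(2) P(2)] \<mu>(2)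
    by (simp add: int_pow_int)
  then show ?thesis
    unfolding extension_exponents_def using transfer_hom[OF assms(1) P(1) \<mu>(1)] by blast
qed

lemma (in group) extend_invariant_hom:
  assumes "finite (carrier G)" "comm_group A" "torsion_divisible A" "K \<lhd> G"
    and l: "l \<in> hom (G\<lparr>carrier := K\<rparr>) A"
    and invariant: "\<And>x k. x \<in> carrier G \<Longrightarrow> k \<in> K \<Longrightarrow> l (x \<otimes> k \<otimes> inv x) = l k"
    and cyclic_mod_K: "\<And>q. Factorial_Ring.prime q \<Longrightarrow> q dvd card (rcosets K) \<Longrightarrow>
      \<exists>P g. subgroup P G \<and> K \<subseteq> P \<and> g \<in> carrier G \<and> (\<forall>x\<in>P. \<exists>i::int. x \<otimes> g [^] (-i) \<in> K)
        \<and> \<not> q dvd card (rcosets P)"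
  shows "\<exists>\<alpha> \<in> hom G A. \<forall>k\<in>K. \<alpha> k = l k"
proof -
  interpret A: comm_group A by fact
  interpret K: normal K G by fact
  let ?S = "extension_exponents G A K l"
  have lA: "l k \<in> carrier A" if "k \<in> K" for k
    using hom_in_carrier[OF l] that by simp
  have index_pos: "card (rcosets K) > 0"
    using lagrange[OF K.is_subgroup] assms(1) by (metis gr0I mult_is_0 order_gt_0_iff_finite)
  have index_mem: "int (card (rcosets K)) \<in> ?S"
    using index_mem_extension_exponents[OF assms(2,4) invariant K.is_subgroup subset_refl l] by blast
  have coprime_mem: "\<exists>m\<in>?S. \<not> int q dvd m"
    if q: "Factorial_Ring.prime q" "q dvd card (rcosets K)" for q
  proof -
    obtain P g where P: "subgroup P G" "K \<subseteq> P" and g: "g \<in> carrier G"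
      and gen: "\<forall>x\<in>P. \<exists>i::int. x \<otimes> g [^] (-i) \<in> K" and coprime: "\<not> q dvd card (rcosets P)"
      using cyclic_mod_K[OF q] by blast
    obtain a where "a \<in> carrier A" "\<forall>m::int. g [^] m \<in> K \<longrightarrow> l (g [^] m) = a [^]\<^bsub>A\<^esub> m"
      using ex_root_of_hom_on_powers[OF assms(1-4) l g] by blast
    then obtain \<mu> where "\<mu> \<in> hom (G\<lparr>carrier := P\<rparr>) A" "\<forall>k\<in>K. \<mu> k = l k"
      using extend_hom_along_generator[OF assms(2,4) l invariant g P] gen by blast
    then have "int (card (rcosets P)) \<in> ?S"
      using index_mem_extension_exponents[OF assms(2,4) invariant P] by blast
    with coprime show ?thesis
      using int_dvd_int_iff by blast
  qed
  have "1 \<in> ?S"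
    by (rule one_mem_if_lincomb_closed[OF extension_exponents_lincomb[OF assms(2) lA]
          index_mem index_pos coprime_mem])
  then obtain \<alpha> where "\<alpha> \<in> hom G A" "\<forall>k\<in>K. \<alpha> k = l k [^]\<^bsub>A\<^esub> (1::int)"
    unfolding extension_exponents_def by blast
  then show ?thesis
    using lA by auto
qed

section \<open>Cyclic Sylow subgroups of the quotient\<close>

lemma (in normal) card_Union_FactGroup_subgroup:
  assumes "subgroup S (G Mod H)"
  shows "card (\<Union>S) = card S * card H"
proof -
  have "H \<in> S"
    using subgroup.one_closed[OF assms] by simp
  then have "subgroup H (G\<lparr>carrier := \<Union>S\<rparr>)"
    using subgroup_incl[OF is_subgroup factgroup_subgroup_union_subgroup[OF assms]] by blast
  moreover have "group (G\<lparr>carrier := \<Union>S\<rparr>)"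
    by (rule subgroup_imp_group[OF factgroup_subgroup_union_subgroup[OF assms]])
  ultimately have "card (rcosets\<^bsub>G\<lparr>carrier := \<Union>S\<rparr>\<^esub> H) * card H = card (\<Union>S)"
    using group.lagrange by (fastforce simp: order_def)
  then show ?thesis
    using factgroup_subgroup_union_factor[OF assms] by simp
qed

lemma (in normal) cyclic_FactGroup_subgroup_generator:
  assumes "subgroup S (G Mod H)" "cyclic_group ((G Mod H)\<lparr>carrier := S\<rparr>)"
  shows "\<exists>g\<in>carrier G. \<forall>x\<in>\<Union>S. \<exists>i::int. x \<otimes> g [^] (-i) \<in> H"
proof -
  interpret Q: group "G Mod H"
    by (rule factorgroup_is_group)
  interpret S: group "(G Mod H)\<lparr>carrier := S\<rparr>"
    by (rule Q.subgroup_imp_group[OF assms(1)])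
  obtain c where c: "c \<in> S" "S = range (\<lambda>i::int. c [^]\<^bsub>(G Mod H)\<lparr>carrier := S\<rparr>\<^esub> i)"
    using assms(2) S.cyclic_group by auto
  then have S_pow: "S = range (\<lambda>i::int. c [^]\<^bsub>G Mod H\<^esub> i)"
    using Q.int_pow_consistent[OF assms(1)] by simp
  obtain g where g: "g \<in> carrier G" "c = H #> g"
    using subgroup.mem_carrier[OF assms(1) c(1)] by (auto simp: carrier_FactGroup)
  have "\<exists>i::int. x \<otimes> g [^] (-i) \<in> H" if "x \<in> \<Union>S" for x
  proof -
    have x: "x \<in> carrier G" "H #> x \<in> S"
      using that factgroup_subgroup_union_char[OF assms(1)] by auto
    then obtain i :: int where "H #> x = H #> (g [^] i)"
      using S_pow FactGroup_int_pow[OF g(1)] g(2) by auto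
    then have "x \<otimes> inv (g [^] i) \<in> H"
      using rcos_self[OF x(1) is_subgroup] rcos_module[OF is_group] x(1) g(1) by simp
    then show ?thesis
      using g(1) by (auto simp: int_pow_neg)
  qed
  with g show ?thesis
    by blast
qed

lemma (in normal) card_rcosets_Union_FactGroup_subgroup:
  assumes "finite (carrier G)" "subgroup S (G Mod H)"
  shows "card (rcosets (\<Union>S)) * card S = card (rcosets H)"
proof -
  have "card H > 0"
    using finite_subset[OF subset assms(1)] subgroup.one_closed[OF is_subgroup] card_gt_0_iff
    by blast
  moreover have "card (rcosets (\<Union>S)) * card S * card H = card (rcosets H) * card H"
    using lagrange[OF factgroup_subgroup_union_subgroup[OF assms(2)]] lagrange[OF is_subgroup]
      card_Union_FactGroup_subgroup[OF assms(2)]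
    by (simp add: mult.assoc)
  ultimately show ?thesis
    by simp
qed

lemma not_dvd_cofactor_of_multiplicity:
  fixes q m n :: nat
  assumes "Factorial_Ring.prime q" "n > 0" "m * q ^ multiplicity q n = n"
  shows "\<not> q dvd m"
proof
  assume "q dvd m"
  then have "q * q ^ multiplicity q n dvd m * q ^ multiplicity q n"
    by (rule mult_dvd_mono) simp
  then have "q * q ^ multiplicity q n dvd n"
    using assms(3) by simp
  then have "Suc (multiplicity q n) \<le> multiplicity q n"
    using assms(1,2) by (intro multiplicity_geI) (auto simp: prime_def)
  then show False
    by simp
qed

lemma (in group) ex_cyclic_mod_subgroup_coprime_index:
  assumes "finite (carrier G)" "K \<lhd> G" "Factorial_Ring.prime q"
    and cyclic: "\<And>P. sylow_subgroup (G Mod K) q P \<Longrightarrow> cyclic_group ((G Mod K)\<lparr>carrier := P\<rparr>)"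
  shows "\<exists>P g. subgroup P G \<and> K \<subseteq> P \<and> g \<in> carrier G \<and> (\<forall>x\<in>P. \<exists>i::int. x \<otimes> g [^] (-i) \<in> K)
      \<and> \<not> q dvd card (rcosets P)"
proof -
  interpret K: normal K G by fact
  interpret Q: group "G Mod K"
    by (rule K.factorgroup_is_group)
  define a where "a = multiplicity q (order (G Mod K))"
  have "order (G Mod K) = q ^ a * (order (G Mod K) div q ^ a)"
    unfolding a_def by (simp add: multiplicity_dvd)
  moreover have fin: "finite (carrier (G Mod K))"
    using assms(1) by (simp add: carrier_FactGroup)
  ultimately obtain S where S: "subgroup S (G Mod K)" "card S = q ^ a"
    using sylow_thm[OF assms(3) Q.is_group] by blast
  then have "cyclic_group ((G Mod K)\<lparr>carrier := S\<rparr>)"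
    by (intro cyclic) (simp add: sylow_subgroup_def a_def)
  then obtain g where g: "g \<in> carrier G" "\<forall>x\<in>\<Union>S. \<exists>i::int. x \<otimes> g [^] (-i) \<in> K"
    using K.cyclic_FactGroup_subgroup_generator[OF S(1)] by blast
  have "K \<in> S"
    using subgroup.one_closed[OF S(1)] by simp
  then have "K \<subseteq> \<Union>S"
    by blast
  moreover have "\<not> q dvd card (rcosets (\<Union>S))"
    using not_dvd_cofactor_of_multiplicity[OF assms(3)] Q.order_gt_0_iff_finite fin
      K.card_rcosets_Union_FactGroup_subgroup[OF assms(1) S(1)] S(2)
    by (simp add: a_def order_def FactGroup_def)
  ultimately show ?thesis
    using K.factgroup_subgroup_union_subgroup[OF S(1)] g by (intro exI[of _ "\<Union>S"] exI[of _ g]) simp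
qed

section \<open>Subdirect products\<close>

lemma (in comm_group) hom_DirProd_pointwise_mult:
  assumes "\<alpha> \<in> hom G1 G" "\<beta> \<in> hom H1 G"
  shows "(\<lambda>u. \<alpha> (fst u) \<otimes> \<beta> (snd u)) \<in> hom (G1 \<times>\<times> H1) G"
proof (rule homI)
  fix u assume "u \<in> carrier (G1 \<times>\<times> H1)"
  then show "\<alpha> (fst u) \<otimes> \<beta> (snd u) \<in> carrier G"
    using hom_in_carrier[OF assms(1)] hom_in_carrier[OF assms(2)] by (cases u) simp
next
  fix u v assume "u \<in> carrier (G1 \<times>\<times> H1)" "v \<in> carrier (G1 \<times>\<times> H1)"
  then show "\<alpha> (fst (u \<otimes>\<^bsub>G1 \<times>\<times> H1\<^esub> v)) \<otimes> \<beta> (snd (u \<otimes>\<^bsub>G1 \<times>\<times> H1\<^esub> v))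
      = \<alpha> (fst u) \<otimes> \<beta> (snd u) \<otimes> (\<alpha> (fst v) \<otimes> \<beta> (snd v))"
    using hom_mult[OF assms(1)] hom_mult[OF assms(2)] hom_in_carrier[OF assms(1)]
      hom_in_carrier[OF assms(2)]
    by (auto simp: mult_DirProd' m_ac)
qed

locale subdirect_product = G: group G + H: group H
  for G :: "('a, 'm) monoid_scheme" and H :: "('b, 'n) monoid_scheme" and U :: "('a \<times> 'b) set" +
  assumes subdirect: "subdirect G H U"
begin

lemma subgroup_U: "subgroup U (G \<times>\<times> H)"
  using subdirect by (simp add: subdirect_def)

lemma mem_U_carrier:
  assumes "(g, h) \<in> U"
  shows "g \<in> carrier G" "h \<in> carrier H"
  using subgroup.subset[OF subgroup_U] assms by auto

lemma pair_mult_mem: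
  "(g, h) \<in> U \<Longrightarrow> (g', h') \<in> U \<Longrightarrow> (g \<otimes>\<^bsub>G\<^esub> g', h \<otimes>\<^bsub>H\<^esub> h') \<in> U"
  using subgroup.m_closed[OF subgroup_U] by fastforce

lemma pair_inv_mem:
  assumes "(g, h) \<in> U"
  shows "(inv\<^bsub>G\<^esub> g, inv\<^bsub>H\<^esub> h) \<in> U"
  using subgroup.m_inv_closed[OF subgroup_U assms] mem_U_carrier[OF assms]
  by (simp add: inv_DirProd[OF G.is_group H.is_group])

lemma ex_pair_fst: "g \<in> carrier G \<Longrightarrow> \<exists>h. (g, h) \<in> U"
  using subdirect by (auto simp: subdirect_def proj1_def)

lemma ex_pair_snd: "h \<in> carrier H \<Longrightarrow> \<exists>g. (g, h) \<in> U"
  using subdirect by (auto simp: subdirect_def proj2_def)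

lemma mem_ker1_iff: "k \<in> ker1 H U \<longleftrightarrow> (k, \<one>\<^bsub>H\<^esub>) \<in> U"
  by (simp add: ker1_def)

lemma conj_mem_ker1:
  assumes "x \<in> carrier G" "k \<in> ker1 H U"
  shows "x \<otimes>\<^bsub>G\<^esub> k \<otimes>\<^bsub>G\<^esub> inv\<^bsub>G\<^esub> x \<in> ker1 H U"
proof -
  obtain h where xh: "(x, h) \<in> U"
    using ex_pair_fst[OF assms(1)] by blast
  have "(x \<otimes>\<^bsub>G\<^esub> k \<otimes>\<^bsub>G\<^esub> inv\<^bsub>G\<^esub> x, h \<otimes>\<^bsub>H\<^esub> \<one>\<^bsub>H\<^esub> \<otimes>\<^bsub>H\<^esub> inv\<^bsub>H\<^esub> h) \<in> U"
    using pair_mult_mem[OF pair_mult_mem[OF xh] pair_inv_mem[OF xh]] assms(2)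
    by (simp add: mem_ker1_iff)
  then show ?thesis
    using mem_U_carrier(2)[OF xh] by (simp add: mem_ker1_iff)
qed

lemma ker1_normal: "ker1 H U \<lhd> G"
proof (rule G.normal_invI)
  show "subgroup (ker1 H U) G"
  proof (rule G.subgroupI)
    show "ker1 H U \<subseteq> carrier G"
      using mem_U_carrier(1) by (auto simp: mem_ker1_iff)
    show "ker1 H U \<noteq> {}"
      using subgroup.one_closed[OF subgroup_U] by (auto simp: mem_ker1_iff)
    show "inv\<^bsub>G\<^esub> k \<in> ker1 H U" if "k \<in> ker1 H U" for k
      using pair_inv_mem that by (fastforce simp: mem_ker1_iff)
    show "k \<otimes>\<^bsub>G\<^esub> k' \<in> ker1 H U" if "k \<in> ker1 H U" "k' \<in> ker1 H U" for k k'
      using pair_mult_mem that by (fastforce simp: mem_ker1_iff)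
  qed
qed (rule conj_mem_ker1)

lemma goursat_quot_eq: "goursat_quot G H U = G Mod ker1 H U"
  using subdirect by (simp add: goursat_quot_def subdirect_def)

lemma hom_restrict_ker1:
  assumes "f \<in> hom ((G \<times>\<times> H)\<lparr>carrier := U\<rparr>) A"
  shows "(\<lambda>k. f (k, \<one>\<^bsub>H\<^esub>)) \<in> hom (G\<lparr>carrier := ker1 H U\<rparr>) A"
  using assms pair_mult_mem by (fastforce simp: hom_def mem_ker1_iff)

lemma hom_ker1_conj_invariant:
  assumes "comm_group A" and f: "f \<in> hom ((G \<times>\<times> H)\<lparr>carrier := U\<rparr>) A"
    and x: "x \<in> carrier G" and k: "k \<in> ker1 H U"
  shows "f (x \<otimes>\<^bsub>G\<^esub> k \<otimes>\<^bsub>G\<^esub> inv\<^bsub>G\<^esub> x, \<one>\<^bsub>H\<^esub>) = f (k, \<one>\<^bsub>H\<^esub>)"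
proof -
  interpret A: comm_group A by fact
  let ?c = "x \<otimes>\<^bsub>G\<^esub> k \<otimes>\<^bsub>G\<^esub> inv\<^bsub>G\<^esub> x"
  obtain h where xh: "(x, h) \<in> U"
    using ex_pair_fst[OF x] by blast
  have c: "(?c, \<one>\<^bsub>H\<^esub>) \<in> U" and k1: "(k, \<one>\<^bsub>H\<^esub>) \<in> U"
    using conj_mem_ker1[OF x k] k by (simp_all add: mem_ker1_iff)
  have kG: "k \<in> carrier G" and hH: "h \<in> carrier H"
    using mem_U_carrier k1 xh by auto
  have f_mult: "f (g \<otimes>\<^bsub>G\<^esub> g', h \<otimes>\<^bsub>H\<^esub> h') = f (g, h) \<otimes>\<^bsub>A\<^esub> f (g', h')"
    if "(g, h) \<in> U" "(g', h') \<in> U" for g h g' h'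
    using hom_mult[OF f] that by fastforce
  have fA: "f u \<in> carrier A" if "u \<in> U" for u
    using hom_in_carrier[OF f] that by simp
  have "?c \<otimes>\<^bsub>G\<^esub> x = x \<otimes>\<^bsub>G\<^esub> k"
    using x kG by (simp add: G.m_assoc)
  then have "f (?c, \<one>\<^bsub>H\<^esub>) \<otimes>\<^bsub>A\<^esub> f (x, h) = f (x, h) \<otimes>\<^bsub>A\<^esub> f (k, \<one>\<^bsub>H\<^esub>)"
    using f_mult[OF c xh] f_mult[OF xh k1] hH by simp
  also have "\<dots> = f (k, \<one>\<^bsub>H\<^esub>) \<otimes>\<^bsub>A\<^esub> f (x, h)"
    using fA xh k1 by (simp add: A.m_comm)
  finally show ?thesis
    using fA c k1 xh A.right_cancel by blast
qed

lemma hom_factors_through_snd: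
  assumes "group A" and \<psi>: "\<psi> \<in> hom ((G \<times>\<times> H)\<lparr>carrier := U\<rparr>) A"
    and trivial: "\<And>k. k \<in> ker1 H U \<Longrightarrow> \<psi> (k, \<one>\<^bsub>H\<^esub>) = \<one>\<^bsub>A\<^esub>"
  shows "\<exists>\<beta>\<in>hom H A. \<forall>g h. (g, h) \<in> U \<longrightarrow> \<psi> (g, h) = \<beta> h"
proof -
  interpret A: group A by fact
  have \<psi>_mult: "\<psi> (g \<otimes>\<^bsub>G\<^esub> g', h \<otimes>\<^bsub>H\<^esub> h') = \<psi> (g, h) \<otimes>\<^bsub>A\<^esub> \<psi> (g', h')"
    if "(g, h) \<in> U" "(g', h') \<in> U" for g h g' h'
    using hom_mult[OF \<psi>] that by fastforce
  have \<psi>_A: "\<psi> u \<in> carrier A" if "u \<in> U" for u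
    using hom_in_carrier[OF \<psi>] that by simp
  define \<beta> where "\<beta> h = \<psi> (SOME g. (g, h) \<in> U, h)" for h
  have \<beta>: "\<psi> (g, h) = \<beta> h" if gh: "(g, h) \<in> U" for g h
  proof -
    define g' where "g' = (SOME g. (g, h) \<in> U)"
    have g'h: "(g', h) \<in> U"
      unfolding g'_def using gh by (rule someI)
    have gG: "g \<in> carrier G" and g'G: "g' \<in> carrier G" and hH: "h \<in> carrier H"
      using mem_U_carrier gh g'h by auto
    have "(g \<otimes>\<^bsub>G\<^esub> inv\<^bsub>G\<^esub> g', h \<otimes>\<^bsub>H\<^esub> inv\<^bsub>H\<^esub> h) \<in> U"
      using pair_mult_mem[OF gh pair_inv_mem[OF g'h]] .
    then have k: "g \<otimes>\<^bsub>G\<^esub> inv\<^bsub>G\<^esub> g' \<in> ker1 H U"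
      using hH by (simp add: mem_ker1_iff)
    have "\<psi> (g, h) = \<psi> ((g \<otimes>\<^bsub>G\<^esub> inv\<^bsub>G\<^esub> g') \<otimes>\<^bsub>G\<^esub> g', \<one>\<^bsub>H\<^esub> \<otimes>\<^bsub>H\<^esub> h)"
      using gG g'G hH by (simp add: G.m_assoc)
    also have "\<dots> = \<psi> (g', h)"
      using \<psi>_mult[OF k[unfolded mem_ker1_iff] g'h] trivial[OF k] \<psi>_A[OF g'h] by simp
    finally show ?thesis
      unfolding \<beta>_def g'_def .
  qed
  have "\<beta> \<in> hom H A"
  proof (rule homI)
    fix h assume "h \<in> carrier H"
    then obtain g where "(g, h) \<in> U"
      using ex_pair_snd by blast
    then show "\<beta> h \<in> carrier A"
      using \<beta> \<psi>_A by metis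
  next
    fix h h' assume "h \<in> carrier H" "h' \<in> carrier H"
    then obtain g g' where "(g, h) \<in> U" "(g', h') \<in> U"
      using ex_pair_snd by meson
    then show "\<beta> (h \<otimes>\<^bsub>H\<^esub> h') = \<beta> h \<otimes>\<^bsub>A\<^esub> \<beta> h'"
      using \<beta> \<psi>_mult pair_mult_mem by metis
  qed
  with \<beta> show ?thesis
    by blast
qed

lemma extend_hom_from_ker1:
  assumes "comm_group A" and f: "f \<in> hom ((G \<times>\<times> H)\<lparr>carrier := U\<rparr>) A"
    and \<alpha>: "\<alpha> \<in> hom G A" and \<alpha>_ker1: "\<And>k. k \<in> ker1 H U \<Longrightarrow> \<alpha> k = f (k, \<one>\<^bsub>H\<^esub>)"
  shows "\<exists>\<phi>\<in>hom (G \<times>\<times> H) A. \<forall>u\<in>U. \<phi> u = f u"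
proof -
  interpret A: comm_group A by fact
  have fA: "f u \<in> carrier A" if "u \<in> U" for u
    using hom_in_carrier[OF f] that by simp
  have \<alpha>A: "\<alpha> g \<in> carrier A" if "g \<in> carrier G" for g
    using hom_in_carrier[OF \<alpha>] that .
  define \<psi> where "\<psi> u = f u \<otimes>\<^bsub>A\<^esub> inv\<^bsub>A\<^esub> \<alpha> (fst u)" for u
  have "\<psi> \<in> hom ((G \<times>\<times> H)\<lparr>carrier := U\<rparr>) A"
  proof (rule homI)
    fix u assume "u \<in> carrier ((G \<times>\<times> H)\<lparr>carrier := U\<rparr>)"
    then show "\<psi> u \<in> carrier A"
      using fA \<alpha>A mem_U_carrier by (cases u) (auto simp: \<psi>_def)
  next
    fix u v assume "u \<in> carrier ((G \<times>\<times> H)\<lparr>carrier := U\<rparr>)" "v \<in> carrier ((G \<times>\<times> H)\<lparr>carrier := U\<rparr>)"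
    then have u: "u \<in> U" and v: "v \<in> U" and "fst u \<in> carrier G" "fst v \<in> carrier G"
      using mem_U_carrier by (cases u, cases v, auto)+
    then show "\<psi> (u \<otimes>\<^bsub>(G \<times>\<times> H)\<lparr>carrier := U\<rparr>\<^esub> v) = \<psi> u \<otimes>\<^bsub>A\<^esub> \<psi> v"
      using hom_mult[OF f] hom_mult[OF \<alpha>] fA \<alpha>A
      by (simp add: \<psi>_def mult_DirProd' A.inv_mult A.m_ac)
  qed
  moreover have "\<psi> (k, \<one>\<^bsub>H\<^esub>) = \<one>\<^bsub>A\<^esub>" if "k \<in> ker1 H U" for k
    using \<alpha>_ker1[OF that] fA that by (simp add: \<psi>_def mem_ker1_iff)
  ultimately obtain \<beta> where \<beta>: "\<beta> \<in> hom H A" "\<forall>g h. (g, h) \<in> U \<longrightarrow> \<psi> (g, h) = \<beta> h"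
    using hom_factors_through_snd[OF A.is_group] by blast
  define \<phi> where "\<phi> u = \<alpha> (fst u) \<otimes>\<^bsub>A\<^esub> \<beta> (snd u)" for u
  have "\<phi> \<in> hom (G \<times>\<times> H) A"
    unfolding \<phi>_def by (rule A.hom_DirProd_pointwise_mult[OF \<alpha> \<beta>(1)])
  moreover have "\<phi> u = f u" if "u \<in> U" for u
  proof (cases u)
    case (Pair g h)
    with that have "\<phi> u = \<alpha> g \<otimes>\<^bsub>A\<^esub> (f (g, h) \<otimes>\<^bsub>A\<^esub> inv\<^bsub>A\<^esub> \<alpha> g)"
      using \<beta>(2) by (simp add: \<phi>_def \<psi>_def)
    also have "\<dots> = f u"
      using Pair that fA[OF that] \<alpha>A[OF mem_U_carrier(1)[of g h]]
      by (simp add: A.m_lcomm[of "\<alpha> g" "f (g, h)"])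
    finally show ?thesis .
  qed
  ultimately show ?thesis
    by blast
qed

end

theorem corollary4p1:
  fixes G :: "'a monoid" and H :: "'b monoid" and U :: "('a \<times> 'b) set"
  assumes "group G" and "group H"
    and "finite (carrier G)" and "finite (carrier H)"
    and "subdirect G H U"
    and "\<And>(p::nat) P. Factorial_Ring.prime p \<Longrightarrow> p dvd order (goursat_quot G H U) \<Longrightarrow>
            sylow_subgroup (goursat_quot G H U) p P \<Longrightarrow>
            cyclic_group ((goursat_quot G H U)\<lparr>carrier := P\<rparr>)"
  shows "\<forall>A :: 'c monoid. satisfies_hypothesis A \<longrightarrow> A_extensible G H A U"
proof (intro allI impI)
  fix A :: "'c monoid"
  assume "satisfies_hypothesis A"
  then obtain \<pi> where A: "comm_group A" and "hypothesis_with A \<pi>"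
    unfolding satisfies_hypothesis_def by blast
  then have divisible: "torsion_divisible A"
    by (rule comm_group.torsion_divisible_if_hypothesis_with)
  interpret subdirect_product G H U
    using assms(1,2,5) by (simp add: subdirect_product_def subdirect_product_axioms_def)
  let ?K = "ker1 H U"
  have cyclic_mod_K: "\<exists>P g. subgroup P G \<and> ?K \<subseteq> P \<and> g \<in> carrier G
      \<and> (\<forall>x\<in>P. \<exists>i::int. x \<otimes>\<^bsub>G\<^esub> g [^]\<^bsub>G\<^esub> (-i) \<in> ?K) \<and> \<not> q dvd card (rcosets\<^bsub>G\<^esub> P)"
    if "Factorial_Ring.prime q" "q dvd card (rcosets\<^bsub>G\<^esub> ?K)" for q
    using G.ex_cyclic_mod_subgroup_coprime_index[OF assms(3) ker1_normal that(1)] assms(6) that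
    by (simp add: goursat_quot_eq order_def FactGroup_def)
  show "A_extensible G H A U"
    unfolding A_extensible_def
  proof
    fix f assume f: "f \<in> hom ((G \<times>\<times> H)\<lparr>carrier := U\<rparr>) A"
    obtain \<alpha> where "\<alpha> \<in> hom G A" "\<forall>k\<in>?K. \<alpha> k = f (k, \<one>\<^bsub>H\<^esub>)"
      using G.extend_invariant_hom[OF assms(3) A divisible ker1_normal hom_restrict_ker1[OF f]
          hom_ker1_conj_invariant[OF A f] cyclic_mod_K] by blast
    then show "\<exists>\<phi>\<in>hom (G \<times>\<times> H) A. \<forall>u\<in>U. \<phi> u = f u"
      using extend_hom_from_ker1[OF A f] by blast
  qed
qed

end
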